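(* Let $\alpha,\beta,p,q>0$ with $\beta p>1$ (equivalently, the generalized Beta-prime distribution $GBP(\alpha,\beta,p,q)$ has finite mean $\mu$) and $\alpha+\beta\neq 1$. Let $F$ be the CDF of $GBP(\alpha,\beta,p,q)$, let $y>0$, and set $w=\frac{y^p}{q^p+y^p}$. Then $$ \begin{aligned} \mathrm{CRPS}(F\mid y) = {}&2\mu - y +\frac{2}{B(\alpha, \beta)}\left(y\,B(w;\alpha,\beta)+\frac{y}{\alpha+\beta-1}\, w^{\alpha-1}(1-w)^\beta\left(1-{}_2F_1\!\left(1,\alpha+\beta-1;\alpha+\tfrac1p;w\right)\right) \right)\\ &-\frac{2q}{\alpha B(\alpha,\beta)^2}\,B\!\left(2\alpha+\tfrac1p,\,2\beta-\tfrac1p\right)\, {}_3F_2\!\left(\alpha+\beta,\, 1,\, 2\alpha+\tfrac1p;\;\alpha+1,\,2\alpha+2\beta;\;1\right). \end{aligned} $$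
   Context: The generalized Beta-prime distribution $GBP(\alpha,\beta,p,q)$ with parameters $\alpha,\beta,p,q>0$ is the distribution on $(0,\infty)$ with density $p_Z(z)=\frac{p}{qB(\alpha,\beta)}\frac{(z/q)^{\alpha p-1}}{(1+(z/q)^p)^{\alpha+\beta}}$ for $z>0$. Its mean is $\mu=q\,\frac{B(\alpha+1/p,\beta-1/p)}{B(\alpha,\beta)}$ when $\beta p>1$. For a CDF $F$ on $\mathbb R$ and an observation $y\in\mathbb R$, the Continuous Ranked Probability Score is $\mathrm{CRPS}(F\mid y)=\int_{\mathbb R}(F(x)-H(x-y))^2\,dx$, where $H$ is the Heaviside step function ($H(t)=1$ for $t\ge0$, $0$ otherwise). $B(\alpha,\beta)$ is the Beta function, $B(x;\alpha,\beta)=\int_0^x t^{\alpha-1}(1-t)^{\beta-1}dt$ is the (non-regularized) incomplete Beta function, and ${}_2F_1$, ${}_3F_2$ denote the generalized hypergeometric functions. *)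

theory Defs
  imports "HOL-Analysis.Analysis"
begin

definition gbp_density :: "real \<Rightarrow> real \<Rightarrow> real \<Rightarrow> real \<Rightarrow> real \<Rightarrow> real" where
  "gbp_density \<alpha> \<beta> p q z =
     (if z > 0 then p / (q * Beta \<alpha> \<beta>) * (z / q) powr (\<alpha> * p - 1)
                    / (1 + (z / q) powr p) powr (\<alpha> + \<beta>)
      else 0)"

definition gbp_cdf :: "real \<Rightarrow> real \<Rightarrow> real \<Rightarrow> real \<Rightarrow> real \<Rightarrow> real" where
  "gbp_cdf \<alpha> \<beta> p q x = (LBINT z:{..x}. gbp_density \<alpha> \<beta> p q z)"

text \<open>Its mean (formula valid when beta * p > 1).\<close>
definition gbp_mean :: "real \<Rightarrow> real \<Rightarrow> real \<Rightarrow> real \<Rightarrow> real" where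
  "gbp_mean \<alpha> \<beta> p q = q * Beta (\<alpha> + 1 / p) (\<beta> - 1 / p) / Beta \<alpha> \<beta>"

definition heaviside :: "real \<Rightarrow> real" where
  "heaviside t = (if t \<ge> 0 then 1 else 0)"

definition CRPS :: "(real \<Rightarrow> real) \<Rightarrow> real \<Rightarrow> real" where
  "CRPS F y = (LINT x|lborel. (F x - heaviside (x - y))\<^sup>2)"

definition inc_Beta :: "real \<Rightarrow> real \<Rightarrow> real \<Rightarrow> real" where
  "inc_Beta x a b = (LBINT t:{0..x}. t powr (a - 1) * (1 - t) powr (b - 1))"

definition hyp2F1 :: "real \<Rightarrow> real \<Rightarrow> real \<Rightarrow> real \<Rightarrow> real" where
  "hyp2F1 a b c z = (\<Sum>n. pochhammer a n * pochhammer b n / (pochhammer c n * fact n) * z ^ n)"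

definition hyp3F2 :: "real \<Rightarrow> real \<Rightarrow> real \<Rightarrow> real \<Rightarrow> real \<Rightarrow> real \<Rightarrow> real" where
  "hyp3F2 a1 a2 a3 b1 b2 z =
     (\<Sum>n. pochhammer a1 n * pochhammer a2 n * pochhammer a3 n
            / (pochhammer b1 n * pochhammer b2 n * fact n) * z ^ n)"

end

(*
  The map W(x) = (x/q)^p / (1 + (x/q)^p) sends GBP(alpha, beta, p, q) to Beta(alpha, beta):
  F(x) = B(W(x); alpha, beta) / B with B = B(alpha, beta).  Since (W/(1 - W))^(1/p) = x/q, the
  factor x turns the Beta(alpha, beta) kernel at W(x) into q times the Beta(alpha + 1/p, beta - 1/p)
  kernel, so on both sides of y the CRPS integrand has an explicit primitive:
    F^2        is the derivative of  x F^2 - 2q/B^2 K(W x),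
    (1 - F)^2  is the derivative of  x (1 - F)^2 + 2q/B B(W x; alpha + 1/p, beta - 1/p)
                                     - 2q/B^2 K(W x),
  where K(t) integrates s^(alpha + 1/p - 1) (1 - s)^(beta - 1/p - 1) B(s; alpha, beta) over [0, t].
  The boundary term x (1 - F)^2 vanishes at infinity because beta p > 1, and the second primitive
  tends to 2 mu - 2q/B^2 K(1) there.  The hypergeometric functions come from the series
  B(t; a, b) = t^a (1 - t)^b * sum_n (a + b)_n / (a)_(n+1) t^n: it is the 2F1 term, and
  integrating it termwise against the Beta kernel gives K(1) as a 3F2 at 1.
*)

theory Submission
  imports Defs "HOL-Real_Asymp.Real_Asymp"
begin

lemma set_integral_Ioo_FTC_nonneg:
  fixes F f :: "real \<Rightarrow> real"
  assumes "a < b"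
    and "\<And>x. a < x \<Longrightarrow> x < b \<Longrightarrow> (F has_real_derivative f x) (at x)"
    and "\<And>x. a < x \<Longrightarrow> x < b \<Longrightarrow> isCont f x"
    and "\<And>x. a < x \<Longrightarrow> x < b \<Longrightarrow> 0 \<le> f x"
    and "(F \<longlongrightarrow> A) (at_right a)" "(F \<longlongrightarrow> B) (at_left b)"
  shows "set_integrable lborel {a<..<b} f" "(LBINT x:{a<..<b}. f x) = B - A"
proof -
  have "set_integrable lborel (einterval a b) f \<and> (LBINT x=ereal a..ereal b. f x) = B - A"
    by (intro conjI interval_integral_FTC_nonneg[of a b F f A B])
       (use assms in \<open>auto simp: ereal_tendsto_simps\<close>)
  then show "set_integrable lborel {a<..<b} f" "(LBINT x:{a<..<b}. f x) = B - A"
    using \<open>a < b\<close> by (simp_all add: interval_lebesgue_integral_def)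
qed

lemma set_integral_Ioi_FTC_nonneg:
  fixes F f :: "real \<Rightarrow> real"
  assumes "\<And>x. a < x \<Longrightarrow> (F has_real_derivative f x) (at x)"
    and "\<And>x. a < x \<Longrightarrow> isCont f x"
    and "\<And>x. a < x \<Longrightarrow> 0 \<le> f x"
    and "(F \<longlongrightarrow> A) (at_right a)" "(F \<longlongrightarrow> B) at_top"
  shows "set_integrable lborel {a<..} f" "(LBINT x:{a<..}. f x) = B - A"
proof -
  have "set_integrable lborel (einterval a \<infinity>) f \<and> (LBINT x=ereal a..\<infinity>. f x) = B - A"
    by (intro conjI interval_integral_FTC_nonneg[of a "\<infinity>" F f A B])
       (use assms in \<open>auto simp: ereal_tendsto_simps\<close>)
  moreover have "einterval a \<infinity> = {a<..}"
    by (auto simp: einterval_iff)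
  ultimately show "set_integrable lborel {a<..} f" "(LBINT x:{a<..}. f x) = B - A"
    by (simp_all add: interval_lebesgue_integral_def)
qed

lemma has_real_derivative_integral_upper:
  fixes f :: "real \<Rightarrow> real"
  assumes "f integrable_on {a..b}" "a < t" "t < b" "isCont f t"
  shows "((\<lambda>u. integral {a..u} f) has_real_derivative f t) (at t)"
proof -
  have "((\<lambda>u. integral {a..u} f) has_vector_derivative f t) (at t within {a..b} - {})"
    using assms by (intro integral_has_vector_derivative_continuous_at)
      (auto intro: continuous_at_imp_continuous_within)
  with assms show ?thesis
    by (simp add: at_within_Icc_at has_real_derivative_iff_has_vector_derivative)
qed

lemma integral_sums_nonneg_dominated:
  fixes f :: "nat \<Rightarrow> 'a::euclidean_space \<Rightarrow> real"
  assumes f: "\<And>n. (f n has_integral I n) S"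
    and nonneg: "\<And>n x. x \<in> S \<Longrightarrow> 0 \<le> f n x"
    and g: "\<And>x. x \<in> S \<Longrightarrow> (\<lambda>n. f n x) sums g x"
    and h: "h integrable_on S" "\<And>x. x \<in> S \<Longrightarrow> g x \<le> h x"
  shows "g integrable_on S" "I sums integral S g"
proof -
  define F where "F k x = (\<Sum>n<k. f n x)" for k x
  have F: "(F k has_integral (\<Sum>n<k. I n)) S" for k
    unfolding F_def by (intro has_integral_sum f) auto
  have F_le_g: "F k x \<le> g x" if "x \<in> S" for k x
    using g[OF that] nonneg[OF that] sum_le_suminf[of "\<lambda>n. f n x" "{..<k}"]
    by (auto simp: F_def sums_iff)
  have int_F: "integral S (F k) = (\<Sum>n<k. I n)" for k
    using F by (rule integral_unique)
  have bound: "\<bar>\<Sum>n<k. I n\<bar> \<le> integral S h" for k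
  proof -
    have "0 \<le> (\<Sum>n<k. I n)"
      using F[of k] by (rule has_integral_nonneg) (auto simp: F_def nonneg intro: sum_nonneg)
    moreover have "(\<Sum>n<k. I n) \<le> integral S h"
      using F[of k] h by (intro has_integral_le[OF F[of k] integrable_integral[OF h(1)]])
        (auto intro: order_trans[OF F_le_g])
    ultimately show ?thesis
      by simp
  qed
  have "bounded (range (\<lambda>k. integral S (F k)))"
    unfolding bounded_iff int_F using bound by (auto intro!: exI[of _ "integral S h"])
  moreover have "(\<lambda>k. F k x) \<longlonglongrightarrow> g x" if "x \<in> S" for x
    using g[OF that] by (simp add: F_def sums_def)
  moreover have "F k x \<le> F (Suc k) x" if "x \<in> S" for k x
    using nonneg[OF that] by (simp add: F_def)
  ultimately have "g integrable_on S \<and> (\<lambda>k. integral S (F k)) \<longlonglongrightarrow> integral S g"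
    using F by (intro monotone_convergence_increasing) blast+
  then show "g integrable_on S" "I sums integral S g"
    by (simp_all add: sums_def int_F)
qed

section \<open>The incomplete Beta function\<close>

definition beta_kernel :: "real \<Rightarrow> real \<Rightarrow> real \<Rightarrow> real" where
  "beta_kernel a b t = t powr (a - 1) * (1 - t) powr (b - 1)"

lemma beta_kernel_nonneg: "0 \<le> beta_kernel a b t"
  by (simp add: beta_kernel_def)

lemma isCont_beta_kernel: "0 < t \<Longrightarrow> t < 1 \<Longrightarrow> isCont (beta_kernel a b) t"
  unfolding beta_kernel_def by (intro continuous_intros) auto

lemma has_integral_beta_kernel: "a > 0 \<Longrightarrow> b > 0 \<Longrightarrow> (beta_kernel a b has_integral Beta a b) {0..1}"
  unfolding beta_kernel_def by (rule has_integral_Beta_real)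

lemma Beta_real_pos: "a > 0 \<Longrightarrow> b > 0 \<Longrightarrow> Beta a b > (0::real)"
  unfolding Beta_def by (intro divide_pos_pos mult_pos_pos Gamma_real_pos) auto

lemma beta_kernel_shift:
  assumes "0 < t" "t < 1"
  shows "beta_kernel (a + s) (b - s) t = (t / (1 - t)) powr s * beta_kernel a b t"
  using assms by (simp add: beta_kernel_def powr_add powr_diff powr_divide field_simps)

lemma inc_Beta_0 [simp]: "inc_Beta 0 a b = 0"
proof -
  have "(LBINT t:{0::real}. t powr (a - 1) * (1 - t) powr (b - 1)) = 0"
    unfolding set_lebesgue_integral_def
    by (rule integral_eq_zero_AE) (use AE_lborel_singleton[of 0] in \<open>auto elim!: eventually_mono\<close>)
  then show ?thesis
    by (simp add: inc_Beta_def)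
qed

lemma inc_Beta_eq_integral:
  assumes "a > 0" "b > 0" "0 \<le> t" "t \<le> 1"
  shows "inc_Beta t a b = integral {0..t} (beta_kernel a b)"
proof -
  have "set_integrable lborel {0..t} (\<lambda>s. s powr (a - 1) * (1 - s) powr (b - 1))"
    by (rule set_integrable_subset[OF integrable_Beta]) (use assms in auto)
  then show ?thesis
    by (simp add: inc_Beta_def beta_kernel_def[abs_def] set_borel_integral_eq_integral)
qed

lemma inc_Beta_eq_set_integral_Ioo:
  "0 < t \<Longrightarrow> inc_Beta t a b = (LBINT s:{0<..<t}. beta_kernel a b s)"
proof -
  assume "0 < t"
  then have "inc_Beta t a b = (LBINT s=ereal 0..ereal t. beta_kernel a b s)"
    unfolding inc_Beta_def beta_kernel_def by (subst interval_integral_Icc) auto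
  with \<open>0 < t\<close> show ?thesis
    by (simp add: interval_lebesgue_integral_def)
qed

lemma inc_Beta_1: "a > 0 \<Longrightarrow> b > 0 \<Longrightarrow> inc_Beta 1 a b = Beta a b"
  using has_integral_beta_kernel by (simp add: inc_Beta_eq_integral integral_unique)

lemma continuous_on_inc_Beta:
  assumes "a > 0" "b > 0"
  shows "continuous_on {0..1} (\<lambda>t. inc_Beta t a b)"
proof -
  have "continuous_on {0..1} (\<lambda>t. integral {0..t} (beta_kernel a b))"
    using has_integral_beta_kernel[OF assms] by (intro indefinite_integral_continuous_1) blast
  then show ?thesis
    by (rule continuous_on_eq) (use assms in \<open>auto simp: inc_Beta_eq_integral\<close>)
qed

lemma has_real_derivative_inc_Beta:
  assumes "a > 0" "b > 0" "0 < t" "t < 1"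
  shows "((\<lambda>t. inc_Beta t a b) has_real_derivative beta_kernel a b t) (at t)"
proof (rule has_field_derivative_transform_within_open[where S = "{0<..<1}"])
  show "((\<lambda>u. integral {0..u} (beta_kernel a b)) has_real_derivative beta_kernel a b t) (at t)"
    using assms has_integral_beta_kernel[OF assms(1,2)]
    by (intro has_real_derivative_integral_upper isCont_beta_kernel) blast+
qed (use assms in \<open>auto simp: inc_Beta_eq_integral\<close>)

lemma inc_Beta_bounds:
  assumes "a > 0" "b > 0" "0 \<le> t" "t \<le> 1"
  shows "0 \<le> inc_Beta t a b" "inc_Beta t a b \<le> Beta a b"
proof -
  have int: "beta_kernel a b integrable_on {0..1}"
    using has_integral_beta_kernel[OF assms(1,2)] by blast
  then have "beta_kernel a b integrable_on {0..t}"
    by (rule integrable_on_subinterval) (use assms in auto)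
  then show "0 \<le> inc_Beta t a b"
    using assms by (simp add: inc_Beta_eq_integral integral_nonneg beta_kernel_nonneg)
  have "integral {0..t} (beta_kernel a b) \<le> integral {0..1} (beta_kernel a b)"
    using assms \<open>beta_kernel a b integrable_on {0..t}\<close> int
    by (intro integral_subset_le) (auto simp: beta_kernel_nonneg)
  then show "inc_Beta t a b \<le> Beta a b"
    using assms by (simp add: inc_Beta_eq_integral inc_Beta_1[symmetric])
qed

lemma Beta_minus_inc_Beta:
  assumes "a > 0" "b > 0" "0 \<le> t" "t \<le> 1"
  shows "Beta a b - inc_Beta t a b = integral {t..1} (beta_kernel a b)"
proof -
  have "beta_kernel a b integrable_on {0..1}"
    using has_integral_beta_kernel[OF assms(1,2)] by blast
  then have "integral {0..t} (beta_kernel a b) + integral {t..1} (beta_kernel a b)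
      = integral {0..1} (beta_kernel a b)"
    using assms by (intro Henstock_Kurzweil_Integration.integral_combine) auto
  moreover have "integral {0..1} (beta_kernel a b) = Beta a b"
    using has_integral_beta_kernel[OF assms(1,2)] by (rule integral_unique)
  ultimately show ?thesis
    using assms by (simp add: inc_Beta_eq_integral)
qed

lemma upper_inc_Beta_shift_le:
  assumes a: "a > 0" and s: "0 \<le> s" "s < b" and t: "0 \<le> t" "t < 1"
  shows "(t / (1 - t)) powr s * (Beta a b - inc_Beta t a b)
           \<le> Beta (a + s) (b - s) - inc_Beta t (a + s) (b - s)"
proof -
  have integrable: "beta_kernel c d integrable_on {t..1}" if "c > 0" "d > 0" for c d
  proof (rule integrable_on_subinterval)
    show "beta_kernel c d integrable_on {0..1}"
      using has_integral_beta_kernel[OF that] by blast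
  qed (use t in auto)
  have "(t / (1 - t)) powr s * beta_kernel a b u \<le> beta_kernel (a + s) (b - s) u"
    if "u \<in> {t..1}" for u
  proof (cases "0 < u \<and> u < 1")
    case True
    then have "t / (1 - t) \<le> u / (1 - u)"
      using t that by (intro frac_le) auto
    then have "(t / (1 - t)) powr s \<le> (u / (1 - u)) powr s"
      using s t by (intro powr_mono2) auto
    then show ?thesis
      using True by (simp add: beta_kernel_shift mult_right_mono beta_kernel_nonneg)
  next
    case False
    with that t have "u = 0 \<or> u = 1"
      by auto
    then show ?thesis
      by (auto simp: beta_kernel_def)
  qed
  moreover have "(\<lambda>u. (t / (1 - t)) powr s * beta_kernel a b u) integrable_on {t..1}"
    using integrable[of a b] a s by (intro integrable_on_mult_right) auto
  ultimately have "integral {t..1} (\<lambda>u. (t / (1 - t)) powr s * beta_kernel a b u)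
      \<le> integral {t..1} (beta_kernel (a + s) (b - s))"
    using integrable[of "a + s" "b - s"] a s by (intro integral_le) auto
  then show ?thesis
    using a s t by (simp add: Beta_minus_inc_Beta)
qed

section \<open>Hypergeometric series for the incomplete Beta function\<close>

definition inc_Beta_coeff :: "real \<Rightarrow> real \<Rightarrow> nat \<Rightarrow> real" where
  "inc_Beta_coeff a b n = pochhammer (a + b) n / pochhammer a (Suc n)"

definition inc_Beta_series :: "real \<Rightarrow> real \<Rightarrow> real \<Rightarrow> real" where
  "inc_Beta_series a b t = (\<Sum>n. inc_Beta_coeff a b n * t ^ n)"

lemma inc_Beta_coeff_pos: "a > 0 \<Longrightarrow> b > 0 \<Longrightarrow> inc_Beta_coeff a b n > 0"
  unfolding inc_Beta_coeff_def by (intro divide_pos_pos pochhammer_pos) auto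

lemma inc_Beta_coeff_Suc:
  assumes "a > 0"
  shows "(a + real n + 1) * inc_Beta_coeff a b (Suc n) = (a + b + real n) * inc_Beta_coeff a b n"
proof -
  have "pochhammer a (Suc (Suc n)) = (a + real n + 1) * pochhammer a (Suc n)"
    by (subst pochhammer_rec') (simp add: add_ac)
  moreover have "pochhammer (a + b) (Suc n) = (a + b + real n) * pochhammer (a + b) n"
    by (subst pochhammer_rec') simp
  moreover have "pochhammer a (Suc n) > 0" "a + real n + 1 > 0"
    using assms by (auto intro: pochhammer_pos)
  ultimately show ?thesis
    unfolding inc_Beta_coeff_def by (simp add: divide_simps)
qed

lemma conv_radius_inc_Beta_coeff:
  assumes "a > 0" "b > 0"
  shows "conv_radius (inc_Beta_coeff a b) = 1"
proof (rule conv_radius_ratio_limit_nonzero[of _ 1])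
  have "norm (inc_Beta_coeff a b n) / norm (inc_Beta_coeff a b (Suc n))
      = (a + real n + 1) / (a + b + real n)" for n
    using inc_Beta_coeff_Suc[OF assms(1), of n b] inc_Beta_coeff_pos[OF assms, of n]
      inc_Beta_coeff_pos[OF assms, of "Suc n"] assms
    by (simp add: field_simps)
  moreover have "(\<lambda>n. (a + real n + 1) / (a + b + real n)) \<longlonglongrightarrow> 1"
    by real_asymp
  ultimately show "(\<lambda>n. norm (inc_Beta_coeff a b n) / norm (inc_Beta_coeff a b (Suc n))) \<longlonglongrightarrow> 1"
    by simp
qed simp_all

lemma summable_inc_Beta_series:
  "a > 0 \<Longrightarrow> b > 0 \<Longrightarrow> \<bar>t\<bar> < 1 \<Longrightarrow> summable (\<lambda>n. inc_Beta_coeff a b n * t ^ n)"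
  by (rule summable_in_conv_radius) (simp add: conv_radius_inc_Beta_coeff)

lemma inc_Beta_series_ode:
  assumes a: "a > 0" and b: "b > 0" and t: "\<bar>t\<bar> < 1"
  obtains S' where "(inc_Beta_series a b has_real_derivative S') (at t)"
    and "a * inc_Beta_series a b t + t * (1 - t) * S' - (a + b) * t * inc_Beta_series a b t = 1"
proof
  define c where "c = inc_Beta_coeff a b"
  define S where "S = inc_Beta_series a b t"
  define S' where "S' = (\<Sum>n. diffs c n * t ^ n)"
  define u where "u n = c n * t ^ n" for n
  show "(inc_Beta_series a b has_real_derivative S') (at t)"
    unfolding inc_Beta_series_def[abs_def] S'_def c_def
    by (rule termdiffs_strong'[of 1]) (use summable_inc_Beta_series[OF a b] t in auto)
  have S: "u sums S"
    using summable_inc_Beta_series[OF a b t]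
    by (simp add: S_def u_def[abs_def] c_def inc_Beta_series_def summable_sums)
  have "summable (\<lambda>n. diffs c n * t ^ n)"
    by (rule termdiff_converges[of t 1])
      (use summable_inc_Beta_series[OF a b] t in \<open>auto simp: c_def\<close>)
  then have "(\<lambda>n. t * (diffs c n * t ^ n)) sums (t * S')"
    by (intro sums_mult) (simp add: S'_def summable_sums)
  then have "(\<lambda>n. real (Suc n) * u (Suc n)) sums (t * S')"
    by (simp add: diffs_def u_def mult_ac)
  then have dS: "(\<lambda>n. real n * u n) sums (t * S')"
    by (subst (asm) sums_Suc_iff) simp
  \<comment> \<open>By the coefficient recursion, the series of (a + n) u n shifted by one index is t times the
    series of (a + b + n) u n.\<close>
  have "(\<lambda>n. (a + real n) * u n) sums (a * S + t * S')"
    using sums_add[OF sums_mult[OF S, of a] dS] by (simp add: distrib_right)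
  moreover have "(a + real 0) * u 0 = 1"
    using a by (simp add: u_def c_def inc_Beta_coeff_def)
  ultimately have "(\<lambda>n. (a + real (Suc n)) * u (Suc n)) sums (a * S + t * S' - 1)"
    by (subst sums_Suc_iff) simp
  moreover have "(a + real (Suc n)) * u (Suc n) = t * ((a + b) * u n + real n * u n)" for n
    using inc_Beta_coeff_Suc[OF a, of n b] by (simp add: u_def c_def algebra_simps)
  ultimately have "(\<lambda>n. t * ((a + b) * u n + real n * u n)) sums (a * S + t * S' - 1)"
    by simp
  moreover have "(\<lambda>n. t * ((a + b) * u n + real n * u n)) sums (t * ((a + b) * S + t * S'))"
    by (intro sums_mult sums_add S dS)
  ultimately have "a * S + t * S' - 1 = t * ((a + b) * S + t * S')"
    by (rule sums_unique2)
  then show "a * S + t * (1 - t) * S' - (a + b) * t * S = 1"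
    by (simp add: algebra_simps)
qed

lemma has_real_derivative_inc_Beta_closed_form:
  assumes a: "a > 0" and b: "b > 0" and t: "0 < t" "t < 1"
  shows "((\<lambda>t. t powr a * (1 - t) powr b * inc_Beta_series a b t)
           has_real_derivative beta_kernel a b t) (at t)"
proof -
  define S where "S = inc_Beta_series a b t"
  obtain S' where dS: "(inc_Beta_series a b has_real_derivative S') (at t)"
    and ode: "a * S + t * (1 - t) * S' - (a + b) * t * S = 1"
    using inc_Beta_series_ode[OF a b, of t] t unfolding S_def by auto
  have "((\<lambda>t. t powr a * (1 - t) powr b * inc_Beta_series a b t) has_real_derivative
      (a * t powr (a - 1) * (1 - t) powr b - b * t powr a * (1 - t) powr (b - 1)) * S
      + t powr a * (1 - t) powr b * S') (at t)"
    unfolding S_def using t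
    by (auto intro!: derivative_eq_intros dS simp: algebra_simps)
  moreover have "(a * t powr (a - 1) * (1 - t) powr b - b * t powr a * (1 - t) powr (b - 1)) * S
      + t powr a * (1 - t) powr b * S'
      = beta_kernel a b t * (a * S + t * (1 - t) * S' - (a + b) * t * S)"
    using t by (simp add: beta_kernel_def powr_diff field_simps)
  ultimately show ?thesis
    by (simp add: ode)
qed

lemma inc_Beta_eq_series:
  assumes a: "a > 0" and b: "b > 0" and t: "0 \<le> t" "t < 1"
  shows "inc_Beta t a b = t powr a * (1 - t) powr b * inc_Beta_series a b t"
proof (cases "t = 0")
  case True
  then show ?thesis
    by simp
next
  case False
  define G where "G t = t powr a * (1 - t) powr b * inc_Beta_series a b t" for t
  have "isCont (inc_Beta_series a b) 0"
    using inc_Beta_series_ode[OF a b, of 0] by (auto dest: DERIV_isCont)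
  then have "(G \<longlongrightarrow> 0 * (1 - 0) powr b * inc_Beta_series a b 0) (at_right 0)"
    unfolding G_def using a
    by (intro tendsto_intros) (auto simp: isCont_def filterlim_at_split, real_asymp)
  then have "(G \<longlongrightarrow> 0) (at_right 0)"
    by simp
  moreover have "(G \<longlongrightarrow> G t) (at_left t)"
    using False t DERIV_isCont[OF has_real_derivative_inc_Beta_closed_form[OF a b, of t]]
    by (simp add: G_def[abs_def] isCont_def filterlim_at_split)
  moreover have "(G has_real_derivative beta_kernel a b s) (at s)" if "0 < s" "s < t" for s
    unfolding G_def[abs_def] using that t
    by (intro has_real_derivative_inc_Beta_closed_form[OF a b]) auto
  ultimately have "(LBINT s:{0<..<t}. beta_kernel a b s) = G t - 0"
    using False t
    by (intro set_integral_Ioo_FTC_nonneg(2)[of 0 t G] isCont_beta_kernel beta_kernel_nonneg) auto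
  with False t show ?thesis
    by (simp add: inc_Beta_eq_set_integral_Ioo G_def)
qed

lemma hyp2F1_eq_inc_Beta_series:
  assumes a: "a > 0" and b: "b > 0" and w: "\<bar>w\<bar> < 1"
  shows "hyp2F1 1 (a + b - 1) a w = 1 + (a + b - 1) * w * inc_Beta_series a b w"
proof -
  define u where
    "u n = pochhammer 1 n * pochhammer (a + b - 1) n / (pochhammer a n * fact n) * w ^ n" for n
  have "u (Suc n) = (a + b - 1) * w * (inc_Beta_coeff a b n * w ^ n)" for n
  proof -
    have u: "u m = pochhammer (a + b - 1) m / pochhammer a m * w ^ m" for m
      by (simp add: u_def pochhammer_fact[symmetric])
    have r: "pochhammer (a + b - 1) (Suc n) = (a + b - 1) * pochhammer (a + b) n"
      by (simp add: pochhammer_rec)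
    have "pochhammer a (Suc n) > 0"
      using a by (intro pochhammer_pos) auto
    then show ?thesis
      unfolding u r inc_Beta_coeff_def by (simp add: field_simps)
  qed
  moreover have "(\<lambda>n. (a + b - 1) * w * (inc_Beta_coeff a b n * w ^ n))
      sums ((a + b - 1) * w * inc_Beta_series a b w)"
    using summable_inc_Beta_series[OF a b w]
    by (intro sums_mult) (simp add: inc_Beta_series_def summable_sums)
  ultimately have "(\<lambda>n. u (Suc n)) sums ((a + b - 1) * w * inc_Beta_series a b w)"
    by simp
  then have "u sums ((a + b - 1) * w * inc_Beta_series a b w + u 0)"
    by (simp add: sums_Suc_iff)
  then show ?thesis
    by (simp add: hyp2F1_def u_def[abs_def] sums_iff add.commute)
qed

lemma Beta_plus_nat_left:
  assumes "c > 0" "d > 0"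
  shows "Beta (c + real n) d = Beta c d * pochhammer c n / pochhammer (c + d) n"
proof (induction n)
  case (Suc n)
  have "c + real n \<notin> \<int>\<^sub>\<le>\<^sub>0" "c + real n + d > 0"
    using assms by (auto dest: nonpos_Ints_nonpos)
  then have "Beta (c + real (Suc n)) d = (c + real n) * Beta (c + real n) d / (c + real n + d)"
    using Beta_plus1_left[of "c + real n" d] by (simp add: field_simps add_ac)
  also have "\<dots> = Beta c d * pochhammer c (Suc n) / pochhammer (c + d) (Suc n)"
    using \<open>c + real n + d > 0\<close> unfolding Suc.IH pochhammer_rec' by (simp add: field_simps add_ac)
  finally show ?case .
qed simp

lemma hyp3F2_eq_inc_Beta_coeff_series:
  assumes a: "a > 0" and c: "c > 0" and d: "d > 0"
    and sums: "(\<lambda>n. inc_Beta_coeff a b n * Beta (c + real n) d) sums s"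
  shows "hyp3F2 (a + b) 1 c (a + 1) (c + d) 1 = a / Beta c d * s"
proof -
  have "a / Beta c d * (inc_Beta_coeff a b n * Beta (c + real n) d) =
      pochhammer (a + b) n * pochhammer 1 n * pochhammer c n
        / (pochhammer (a + 1) n * pochhammer (c + d) n * fact n) * 1 ^ n" for n
  proof -
    have "pochhammer (a + 1) n > 0" "pochhammer (c + d) n > 0" "Beta c d > 0"
      using a c d by (auto intro!: pochhammer_pos Beta_real_pos)
    then show ?thesis
      using a unfolding inc_Beta_coeff_def Beta_plus_nat_left[OF c d] pochhammer_rec[of a]
        pochhammer_fact[symmetric]
      by (simp add: field_simps)
  qed
  with sums_mult[OF sums, of "a / Beta c d"] show ?thesis
    unfolding hyp3F2_def by (simp add: sums_iff)
qed

lemma beta_kernel_mult_inc_Beta_sums: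
  assumes a: "a > 0" and b: "b > 0" and t: "0 \<le> t" "t \<le> 1"
  shows "(\<lambda>n. inc_Beta_coeff a b n * beta_kernel (a + c + real n) (b + d) t)
           sums (beta_kernel c d t * inc_Beta t a b)"
proof (cases "t = 0 \<or> t = 1")
  case True
  then show ?thesis
    by (auto simp: beta_kernel_def)
next
  case False
  with t have t: "0 < t" "t < 1"
    by auto
  define k where "k = beta_kernel c d t * (t powr a * (1 - t) powr b)"
  have termwise: "k * (inc_Beta_coeff a b n * t ^ n)
      = inc_Beta_coeff a b n * beta_kernel (a + c + real n) (b + d) t" for n
  proof -
    have "t powr (a + c + real n - 1) = t powr (c - 1) * t powr a * t ^ n"
      using t by (simp add: powr_realpow[symmetric] powr_add[symmetric] algebra_simps)
    moreover have "(1 - t) powr (b + d - 1) = (1 - t) powr (d - 1) * (1 - t) powr b"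
      by (simp add: powr_add[symmetric] algebra_simps)
    ultimately show ?thesis
      by (simp add: k_def beta_kernel_def)
  qed
  have "(\<lambda>n. k * (inc_Beta_coeff a b n * t ^ n)) sums (k * inc_Beta_series a b t)"
    using summable_inc_Beta_series[OF a b, of t] t
    by (intro sums_mult) (simp add: inc_Beta_series_def summable_sums)
  moreover have "k * inc_Beta_series a b t = beta_kernel c d t * inc_Beta t a b"
    using t by (simp add: k_def inc_Beta_eq_series[OF a b])
  ultimately show ?thesis
    unfolding termwise by simp
qed

lemma integral_beta_kernel_mult_inc_Beta:
  assumes a: "a > 0" and b: "b > 0" and c: "c > 0" and d: "d > 0"
  shows "(\<lambda>t. beta_kernel c d t * inc_Beta t a b) integrable_on {0..1}"
    and "(\<lambda>n. inc_Beta_coeff a b n * Beta (a + c + real n) (b + d))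
           sums integral {0..1} (\<lambda>t. beta_kernel c d t * inc_Beta t a b)"
proof -
  note dominated = integral_sums_nonneg_dominated[where S = "{0..1}"
      and f = "\<lambda>n t. inc_Beta_coeff a b n * beta_kernel (a + c + real n) (b + d) t"
      and I = "\<lambda>n. inc_Beta_coeff a b n * Beta (a + c + real n) (b + d)"
      and g = "\<lambda>t. beta_kernel c d t * inc_Beta t a b" and h = "\<lambda>t. beta_kernel c d t * Beta a b"]
  have "((\<lambda>t. inc_Beta_coeff a b n * beta_kernel (a + c + real n) (b + d) t) has_integral
      inc_Beta_coeff a b n * Beta (a + c + real n) (b + d)) {0..1}" for n
    using a b c d by (intro has_integral_mult_right has_integral_beta_kernel) auto
  moreover have "0 \<le> inc_Beta_coeff a b n * beta_kernel (a + c + real n) (b + d) t" for n t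
    using inc_Beta_coeff_pos[OF a b, of n] by (simp add: beta_kernel_nonneg)
  moreover have "(\<lambda>n. inc_Beta_coeff a b n * beta_kernel (a + c + real n) (b + d) t)
      sums (beta_kernel c d t * inc_Beta t a b)" if "t \<in> {0..1}" for t
    using that by (intro beta_kernel_mult_inc_Beta_sums a b) auto
  moreover have "(\<lambda>t. beta_kernel c d t * Beta a b) integrable_on {0..1}"
    using has_integral_mult_left[OF has_integral_beta_kernel[OF c d]] by blast
  moreover have "beta_kernel c d t * inc_Beta t a b \<le> beta_kernel c d t * Beta a b"
    if "t \<in> {0..1}" for t
    using that inc_Beta_bounds[OF a b] by (simp add: mult_left_mono beta_kernel_nonneg)
  ultimately show "(\<lambda>t. beta_kernel c d t * inc_Beta t a b) integrable_on {0..1}"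
    and "(\<lambda>n. inc_Beta_coeff a b n * Beta (a + c + real n) (b + d))
           sums integral {0..1} (\<lambda>t. beta_kernel c d t * inc_Beta t a b)"
    using dominated by blast+
qed

section \<open>The generalized Beta prime distribution\<close>

definition gbp_to_beta :: "real \<Rightarrow> real \<Rightarrow> real \<Rightarrow> real" where
  "gbp_to_beta p q x = (x / q) powr p / (1 + (x / q) powr p)"

definition gbp_to_beta_deriv :: "real \<Rightarrow> real \<Rightarrow> real \<Rightarrow> real" where
  "gbp_to_beta_deriv p q x = p / q * (x / q) powr (p - 1) / (1 + (x / q) powr p)\<^sup>2"

lemma gbp_to_beta_0 [simp]: "gbp_to_beta p q 0 = 0"
  by (simp add: gbp_to_beta_def)

lemma one_plus_powr_pos: "0 < 1 + a powr p" "1 + a powr p \<noteq> (0::real)"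
  using powr_ge_zero[of a p] by linarith+

context
  fixes p q :: real
  assumes p: "p > 0" and q: "q > 0"
begin

lemma gbp_to_beta_eq: "0 \<le> x \<Longrightarrow> gbp_to_beta p q x = x powr p / (q powr p + x powr p)"
proof -
  assume "0 \<le> x"
  define Q where "Q = q powr p"
  define X where "X = x powr p"
  have XQ: "(x / q) powr p = X / Q"
    using q \<open>0 \<le> x\<close> by (simp add: powr_divide X_def Q_def)
  have "0 < Q" "0 \<le> X"
    using q by (simp_all add: Q_def X_def)
  then show ?thesis
    unfolding gbp_to_beta_def XQ X_def[symmetric] Q_def[symmetric] by (simp add: field_simps)
qed

lemma gbp_to_beta_bounds:
  assumes "0 < x"
  shows "0 < gbp_to_beta p q x \<and> gbp_to_beta p q x < 1"
proof -
  define r where "r = (x / q) powr p"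
  have "0 < r"
    using assms q by (simp add: r_def)
  then show ?thesis
    unfolding gbp_to_beta_def r_def[symmetric] by (simp add: field_simps)
qed

lemma gbp_to_beta_odds:
  assumes "0 < x"
  shows "(gbp_to_beta p q x / (1 - gbp_to_beta p q x)) powr (1 / p) = x / q"
proof -
  define r where "r = (x / q) powr p"
  have "0 < r"
    using assms q by (simp add: r_def)
  then have "gbp_to_beta p q x / (1 - gbp_to_beta p q x) = r"
    unfolding gbp_to_beta_def r_def[symmetric] by (simp add: field_simps)
  with assms p q show ?thesis
    by (simp add: r_def powr_powr)
qed

lemma has_real_derivative_gbp_to_beta:
  assumes "0 < x"
  shows "(gbp_to_beta p q has_real_derivative gbp_to_beta_deriv p q x) (at x)"
proof -
  define r where "r = (x / q) powr p"
  define A where "A = (x / q) powr (p - 1)"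
  have "(gbp_to_beta p q has_real_derivative
      (p * A * (1 / q) * (1 + r) - r * (p * A * (1 / q))) / (1 + r)\<^sup>2) (at x)"
    unfolding gbp_to_beta_def[abs_def] r_def A_def using assms q
    by (auto intro!: derivative_eq_intros simp: power2_eq_square one_plus_powr_pos)
  moreover have "(p * A * (1 / q) * (1 + r) - r * (p * A * (1 / q))) / (1 + r)\<^sup>2
      = p / q * A / (1 + r)\<^sup>2"
    by (simp add: ring_distribs)
  ultimately show ?thesis
    by (simp add: gbp_to_beta_deriv_def r_def A_def)
qed

lemma gbp_density_eq:
  assumes "\<alpha> > 0" "\<beta> > 0" "0 < x"
  shows "Beta \<alpha> \<beta> * gbp_density \<alpha> \<beta> p q x
           = gbp_to_beta_deriv p q x * beta_kernel \<alpha> \<beta> (gbp_to_beta p q x)"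
proof -
  define z where "z = x / q"
  define r where "r = z powr p"
  define P where "P = (1 + r) powr (\<alpha> - 1)"
  define Q where "Q = (1 + r) powr (\<beta> - 1)"
  have z: "0 < z" and r: "0 < r" and PQ: "0 < P" "0 < Q"
    using assms q by (simp_all add: z_def r_def P_def Q_def one_plus_powr_pos)
  have W: "gbp_to_beta p q x = r / (1 + r)" "1 - gbp_to_beta p q x = 1 / (1 + r)"
    using r by (simp_all add: gbp_to_beta_def z_def[symmetric] r_def[symmetric] field_simps)
  have "r powr (\<alpha> - 1) = z powr (p * (\<alpha> - 1))"
    using z by (simp add: r_def powr_powr)
  then have k1: "(r / (1 + r)) powr (\<alpha> - 1) = z powr (p * (\<alpha> - 1)) / P"
    using r by (simp add: powr_divide P_def)
  have k2: "(1 / (1 + r)) powr (\<beta> - 1) = 1 / Q"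
    using r by (simp add: powr_divide Q_def)
  have "beta_kernel \<alpha> \<beta> (gbp_to_beta p q x) = z powr (p * (\<alpha> - 1)) / P * (1 / Q)"
    unfolding beta_kernel_def W(2) unfolding W(1) k1 k2 ..
  moreover have "(1 + r) powr (\<alpha> + \<beta>) = (1 + r)\<^sup>2 * P * Q"
  proof -
    have "\<alpha> + \<beta> = 2 + (\<alpha> - 1) + (\<beta> - 1)"
      by simp
    then show ?thesis
      using r unfolding P_def Q_def by (simp only: powr_add powr_numeral)
  qed
  moreover have "z powr (\<alpha> * p - 1) = z powr (p - 1) * z powr (p * (\<alpha> - 1))"
  proof -
    have "\<alpha> * p - 1 = (p - 1) + p * (\<alpha> - 1)"
      by (simp add: algebra_simps)
    then show ?thesis
      by (simp only: powr_add)
  qed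
  moreover have "Beta \<alpha> \<beta> > 0"
    using assms by (simp add: Beta_real_pos)
  ultimately show ?thesis
    using assms r PQ
    by (simp add: gbp_density_def gbp_to_beta_deriv_def z_def[symmetric] r_def[symmetric])
qed

lemma beta_kernel_shift_gbp_to_beta:
  assumes "0 < x"
  shows "beta_kernel (a + 1 / p) (b - 1 / p) (gbp_to_beta p q x)
           = x / q * beta_kernel a b (gbp_to_beta p q x)"
  using gbp_to_beta_bounds[OF assms]
  by (simp add: beta_kernel_shift gbp_to_beta_odds[OF assms])

lemma tendsto_comp_gbp_to_beta:
  assumes "continuous_on {0..1} H"
  shows "((\<lambda>x. H (gbp_to_beta p q x)) \<longlongrightarrow> H 0) (at_right 0)"
    and "((\<lambda>x. H (gbp_to_beta p q x)) \<longlongrightarrow> H 1) at_top"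
proof -
  have in_01: "eventually (\<lambda>x. gbp_to_beta p q x \<in> {0..1}) F" if "eventually (\<lambda>x. 0 < x) F" for F
    using that by eventually_elim (auto dest: gbp_to_beta_bounds intro: less_imp_le)
  have "(gbp_to_beta p q \<longlongrightarrow> 0) (at_right 0)" "(gbp_to_beta p q \<longlongrightarrow> 1) at_top"
    unfolding gbp_to_beta_def[abs_def] using p q by real_asymp+
  then show "((\<lambda>x. H (gbp_to_beta p q x)) \<longlongrightarrow> H 0) (at_right 0)"
    and "((\<lambda>x. H (gbp_to_beta p q x)) \<longlongrightarrow> H 1) at_top"
    using in_01[of "at_right 0"] in_01[of at_top]
    by (auto intro!: continuous_on_tendsto_compose[OF assms]
        simp: eventually_at_right_less eventually_gt_at_top)
qed

end

context
  fixes \<alpha> \<beta> p q :: real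
  assumes \<alpha>: "\<alpha> > 0" and \<beta>: "\<beta> > 0" and p: "p > 0" and q: "q > 0"
begin

lemma isCont_gbp_density:
  assumes "0 < x"
  shows "isCont (gbp_density \<alpha> \<beta> p q) x"
proof -
  have "eventually (\<lambda>z. z \<in> {0<..}) (nhds x)"
    using assms by (intro eventually_nhds_in_open) auto
  then have "eventually (\<lambda>z. gbp_density \<alpha> \<beta> p q z = p / (q * Beta \<alpha> \<beta>) * (z / q) powr (\<alpha> * p - 1)
      / (1 + (z / q) powr p) powr (\<alpha> + \<beta>)) (nhds x)"
    by eventually_elim (simp add: gbp_density_def)
  moreover have "isCont (\<lambda>z. p / (q * Beta \<alpha> \<beta>) * (z / q) powr (\<alpha> * p - 1)
      / (1 + (z / q) powr p) powr (\<alpha> + \<beta>)) x"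
    by (intro continuous_intros) (use assms q in \<open>simp_all add: one_plus_powr_pos(2)\<close>)
  ultimately show ?thesis
    by (rule iffD2[OF isCont_cong])
qed

lemma gbp_density_nonneg: "0 \<le> gbp_density \<alpha> \<beta> p q x"
  using p q Beta_real_pos[OF \<alpha> \<beta>] by (simp add: gbp_density_def)

lemma has_real_derivative_inc_Beta_gbp_to_beta:
  assumes "0 < x"
  shows "((\<lambda>x. inc_Beta (gbp_to_beta p q x) \<alpha> \<beta>)
           has_real_derivative Beta \<alpha> \<beta> * gbp_density \<alpha> \<beta> p q x) (at x)"
  using DERIV_chain2[OF has_real_derivative_inc_Beta has_real_derivative_gbp_to_beta[OF p q assms]]
    gbp_to_beta_bounds[OF p q assms] \<alpha> \<beta>
  by (simp add: gbp_density_eq[OF p q \<alpha> \<beta> assms] mult.commute)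

lemma has_real_derivative_shifted_comp_gbp_to_beta:
  assumes G: "\<And>t. 0 < t \<Longrightarrow> t < 1 \<Longrightarrow>
      (G has_real_derivative beta_kernel (\<alpha> + 1 / p) (\<beta> - 1 / p) t * g t) (at t)"
    and x: "0 < x"
  shows "((\<lambda>x. G (gbp_to_beta p q x)) has_real_derivative
           x / q * Beta \<alpha> \<beta> * gbp_density \<alpha> \<beta> p q x * g (gbp_to_beta p q x)) (at x)"
  using DERIV_chain2[OF G has_real_derivative_gbp_to_beta[OF p q x]] gbp_to_beta_bounds[OF p q x]
  by (simp add: beta_kernel_shift_gbp_to_beta[OF p q x] gbp_density_eq[OF p q \<alpha> \<beta> x] mult_ac)

lemma gbp_cdf_eq:
  "gbp_cdf \<alpha> \<beta> p q x = (if 0 < x then inc_Beta (gbp_to_beta p q x) \<alpha> \<beta> / Beta \<alpha> \<beta> else 0)"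
proof (cases "0 < x")
  case False
  then have "(LBINT z:{..x}. gbp_density \<alpha> \<beta> p q z) = (LBINT z:{..x}. 0)"
    unfolding set_lebesgue_integral_def
    by (intro Bochner_Integration.integral_cong) (auto simp: indicator_def gbp_density_def)
  with False show ?thesis
    by (simp add: gbp_cdf_def)
next
  case True
  define F where "F x = inc_Beta (gbp_to_beta p q x) \<alpha> \<beta> / Beta \<alpha> \<beta>" for x
  have B: "Beta \<alpha> \<beta> > 0"
    using \<alpha> \<beta> by (rule Beta_real_pos)
  have F': "(F has_real_derivative gbp_density \<alpha> \<beta> p q z) (at z)" if "0 < z" for z
    using has_real_derivative_inc_Beta_gbp_to_beta[OF that] B unfolding F_def[abs_def]
    by (auto intro!: derivative_eq_intros)
  have "(LBINT z:{..x}. gbp_density \<alpha> \<beta> p q z) = (LBINT z:{0<..x}. gbp_density \<alpha> \<beta> p q z)"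
    unfolding set_lebesgue_integral_def
    by (intro Bochner_Integration.integral_cong) (auto simp: indicator_def gbp_density_def)
  also have "\<dots> = (LBINT z:{0<..<x}. gbp_density \<alpha> \<beta> p q z)"
    by (rule set_integral_discrete_difference[where X = "{x}"]) auto
  also have "\<dots> = F x - F 0"
  proof (rule set_integral_Ioo_FTC_nonneg(2))
    have "((\<lambda>x. inc_Beta (gbp_to_beta p q x) \<alpha> \<beta>) \<longlongrightarrow> inc_Beta 0 \<alpha> \<beta>) (at_right 0)"
      by (rule tendsto_comp_gbp_to_beta(1)[OF p q continuous_on_inc_Beta[OF \<alpha> \<beta>]])
    then show "(F \<longlongrightarrow> F 0) (at_right 0)"
      unfolding F_def using tendsto_divide_zero by fastforce
    show "(F \<longlongrightarrow> F x) (at_left x)"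
      using DERIV_isCont[OF F'[OF True]] by (simp add: isCont_def filterlim_at_split)
  qed (use True F' isCont_gbp_density gbp_density_nonneg in auto)
  finally show ?thesis
    using True by (simp add: gbp_cdf_def F_def)
qed

lemma has_real_derivative_gbp_cdf:
  assumes "0 < x"
  shows "(gbp_cdf \<alpha> \<beta> p q has_real_derivative gbp_density \<alpha> \<beta> p q x) (at x)"
proof (rule has_field_derivative_transform_within_open[where S = "{0<..}"])
  show "((\<lambda>x. inc_Beta (gbp_to_beta p q x) \<alpha> \<beta> / Beta \<alpha> \<beta>)
      has_real_derivative gbp_density \<alpha> \<beta> p q x) (at x)"
    using has_real_derivative_inc_Beta_gbp_to_beta[OF assms] Beta_real_pos[OF \<alpha> \<beta>]
    by (auto intro!: derivative_eq_intros)
qed (use assms in \<open>auto simp: gbp_cdf_eq\<close>)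

lemma gbp_cdf_bounds: "0 \<le> gbp_cdf \<alpha> \<beta> p q x" "gbp_cdf \<alpha> \<beta> p q x \<le> 1"
  using inc_Beta_bounds[OF \<alpha> \<beta>, of "gbp_to_beta p q x"] gbp_to_beta_bounds[OF p q, of x]
    Beta_real_pos[OF \<alpha> \<beta>]
  by (auto simp: gbp_cdf_eq)

lemma isCont_gbp_cdf: "0 < x \<Longrightarrow> isCont (gbp_cdf \<alpha> \<beta> p q) x"
  using has_real_derivative_gbp_cdf by (rule DERIV_isCont)

lemma tendsto_gbp_cdf_at_right_0: "(gbp_cdf \<alpha> \<beta> p q \<longlongrightarrow> 0) (at_right 0)"
proof -
  have "((\<lambda>x. inc_Beta (gbp_to_beta p q x) \<alpha> \<beta> / Beta \<alpha> \<beta>) \<longlongrightarrow> 0 / Beta \<alpha> \<beta>) (at_right 0)"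
    using tendsto_comp_gbp_to_beta(1)[OF p q continuous_on_inc_Beta[OF \<alpha> \<beta>]] Beta_real_pos[OF \<alpha> \<beta>]
    by (intro tendsto_divide) simp_all
  moreover have "eventually (\<lambda>x. inc_Beta (gbp_to_beta p q x) \<alpha> \<beta> / Beta \<alpha> \<beta>
      = gbp_cdf \<alpha> \<beta> p q x) (at_right 0)"
    by (simp add: eventually_at_right_less gbp_cdf_eq eventually_mono[OF eventually_at_right_less])
  ultimately show ?thesis
    by (simp add: tendsto_cong)
qed

end

definition gbp_K :: "real \<Rightarrow> real \<Rightarrow> real \<Rightarrow> real \<Rightarrow> real" where
  "gbp_K \<alpha> \<beta> p t = integral {0..t} (\<lambda>s. beta_kernel (\<alpha> + 1 / p) (\<beta> - 1 / p) s * inc_Beta s \<alpha> \<beta>)"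

context
  fixes \<alpha> \<beta> p :: real
  assumes \<alpha>: "\<alpha> > 0" and \<beta>: "\<beta> > 0" and p: "p > 0" and \<beta>p: "\<beta> * p > 1"
begin

lemma shifted_params_pos: "\<alpha> + 1 / p > 0" "\<beta> - 1 / p > 0"
  using \<alpha> p \<beta>p by (auto simp: field_simps add_pos_pos)

lemma continuous_on_gbp_K: "continuous_on {0..1} (gbp_K \<alpha> \<beta> p)"
  unfolding gbp_K_def[abs_def]
  by (intro indefinite_integral_continuous_1 integral_beta_kernel_mult_inc_Beta(1) \<alpha> \<beta>
      shifted_params_pos)

lemma has_real_derivative_gbp_K:
  assumes "0 < t" "t < 1"
  shows "(gbp_K \<alpha> \<beta> p has_real_derivative
           beta_kernel (\<alpha> + 1 / p) (\<beta> - 1 / p) t * inc_Beta t \<alpha> \<beta>) (at t)"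
  unfolding gbp_K_def[abs_def] using assms \<alpha> \<beta>
  by (intro has_real_derivative_integral_upper
      [OF integral_beta_kernel_mult_inc_Beta(1)[OF \<alpha> \<beta> shifted_params_pos]]
      continuous_intros isCont_beta_kernel DERIV_isCont[OF has_real_derivative_inc_Beta]) auto

lemma gbp_K_1:
  "gbp_K \<alpha> \<beta> p 1 = Beta (2 * \<alpha> + 1 / p) (2 * \<beta> - 1 / p) / \<alpha>
     * hyp3F2 (\<alpha> + \<beta>) 1 (2 * \<alpha> + 1 / p) (\<alpha> + 1) (2 * \<alpha> + 2 * \<beta>) 1"
proof -
  have CD: "2 * \<alpha> + 1 / p > 0" "2 * \<beta> - 1 / p > 0"
    using shifted_params_pos \<alpha> \<beta> by linarith+
  moreover have "(\<lambda>n. inc_Beta_coeff \<alpha> \<beta> n * Beta (2 * \<alpha> + 1 / p + real n) (2 * \<beta> - 1 / p))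
      sums gbp_K \<alpha> \<beta> p 1"
    using integral_beta_kernel_mult_inc_Beta(2)[OF \<alpha> \<beta> shifted_params_pos]
    by (simp add: gbp_K_def algebra_simps)
  ultimately have "hyp3F2 (\<alpha> + \<beta>) 1 (2 * \<alpha> + 1 / p) (\<alpha> + 1) (2 * \<alpha> + 1 / p + (2 * \<beta> - 1 / p)) 1
      = \<alpha> / Beta (2 * \<alpha> + 1 / p) (2 * \<beta> - 1 / p) * gbp_K \<alpha> \<beta> p 1"
    by (intro hyp3F2_eq_inc_Beta_coeff_series \<alpha>)
  moreover have "Beta (2 * \<alpha> + 1 / p) (2 * \<beta> - 1 / p) > 0"
    using CD by (rule Beta_real_pos)
  ultimately show ?thesis
    using \<alpha> by (simp add: field_simps)
qed

end

section \<open>The CRPS\<close>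

lemma CRPS_eq_split:
  assumes F0: "\<And>x. x \<le> 0 \<Longrightarrow> F x = 0" and y: "0 < y"
    and int1: "set_integrable lborel {0<..<y} (\<lambda>x. (F x)\<^sup>2)"
    and int2: "set_integrable lborel {y<..} (\<lambda>x. (1 - F x)\<^sup>2)"
  shows "CRPS F y = (LBINT x:{0<..<y}. (F x)\<^sup>2) + (LBINT x:{y<..}. (1 - F x)\<^sup>2)"
proof -
  have int2': "set_integrable lborel {y..} (\<lambda>x. (1 - F x)\<^sup>2)"
    using int2 by (subst set_integrable_discrete_difference[where X = "{y}"]) auto
  have "(F x - heaviside (x - y))\<^sup>2
      = indicator {0<..<y} x * (F x)\<^sup>2 + indicator {y..} x * (1 - F x)\<^sup>2" for x
    using F0[of x] y
    by (cases "x \<le> 0"; cases "x < y") (auto simp: heaviside_def indicator_def power2_commute)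
  then have "CRPS F y = (LBINT x:{0<..<y}. (F x)\<^sup>2) + (LBINT x:{y..}. (1 - F x)\<^sup>2)"
    unfolding CRPS_def set_lebesgue_integral_def using int1 int2'
    by (simp add: set_integrable_def)
  also have "(LBINT x:{y..}. (1 - F x)\<^sup>2) = (LBINT x:{y<..}. (1 - F x)\<^sup>2)"
    by (rule set_integral_discrete_difference[where X = "{y}"]) auto
  finally show ?thesis .
qed

context
  fixes \<alpha> \<beta> p q :: real
  assumes \<alpha>: "\<alpha> > 0" and \<beta>: "\<beta> > 0" and p: "p > 0" and q: "q > 0" and \<beta>p: "\<beta> * p > 1"
begin

lemma has_real_derivative_inc_Beta_shifted_comp:
  assumes "0 < x"
  shows "((\<lambda>x. q / Beta \<alpha> \<beta> * inc_Beta (gbp_to_beta p q x) (\<alpha> + 1 / p) (\<beta> - 1 / p))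
           has_real_derivative x * gbp_density \<alpha> \<beta> p q x) (at x)"
proof -
  have "((\<lambda>x. inc_Beta (gbp_to_beta p q x) (\<alpha> + 1 / p) (\<beta> - 1 / p)) has_real_derivative
      x / q * Beta \<alpha> \<beta> * gbp_density \<alpha> \<beta> p q x * 1) (at x)"
    using has_real_derivative_inc_Beta[OF shifted_params_pos[OF \<alpha> \<beta> p \<beta>p]]
    by (intro has_real_derivative_shifted_comp_gbp_to_beta[OF \<alpha> \<beta> p q _ assms]) simp
  then show ?thesis
    using Beta_real_pos[OF \<alpha> \<beta>] q by (auto intro!: derivative_eq_intros)
qed

lemma has_real_derivative_gbp_K_comp:
  assumes "0 < x"
  shows "((\<lambda>x. q / (Beta \<alpha> \<beta>)\<^sup>2 * gbp_K \<alpha> \<beta> p (gbp_to_beta p q x))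
           has_real_derivative x * gbp_density \<alpha> \<beta> p q x * gbp_cdf \<alpha> \<beta> p q x) (at x)"
proof -
  have "((\<lambda>x. gbp_K \<alpha> \<beta> p (gbp_to_beta p q x)) has_real_derivative
      x / q * Beta \<alpha> \<beta> * gbp_density \<alpha> \<beta> p q x * inc_Beta (gbp_to_beta p q x) \<alpha> \<beta>) (at x)"
    by (intro has_real_derivative_shifted_comp_gbp_to_beta[OF \<alpha> \<beta> p q _ assms]
        has_real_derivative_gbp_K[OF \<alpha> \<beta> p \<beta>p])
  moreover have "inc_Beta (gbp_to_beta p q x) \<alpha> \<beta> = Beta \<alpha> \<beta> * gbp_cdf \<alpha> \<beta> p q x"
    using assms Beta_real_pos[OF \<alpha> \<beta>] by (simp add: gbp_cdf_eq[OF \<alpha> \<beta> p q])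
  ultimately show ?thesis
    using Beta_real_pos[OF \<alpha> \<beta>] q by (auto intro!: derivative_eq_intros simp: power2_eq_square)
qed

lemma tendsto_mult_one_minus_gbp_cdf_sq: "((\<lambda>x. x * (1 - gbp_cdf \<alpha> \<beta> p q x)\<^sup>2) \<longlongrightarrow> 0) at_top"
proof (rule tendsto_sandwich[where f = "\<lambda>_. 0"])
  define g where "g x = q / Beta \<alpha> \<beta>
    * (Beta (\<alpha> + 1 / p) (\<beta> - 1 / p) - inc_Beta (gbp_to_beta p q x) (\<alpha> + 1 / p) (\<beta> - 1 / p))"
    for x
  have "(g \<longlongrightarrow> q / Beta \<alpha> \<beta>
      * (Beta (\<alpha> + 1 / p) (\<beta> - 1 / p) - inc_Beta 1 (\<alpha> + 1 / p) (\<beta> - 1 / p))) at_top"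
    unfolding g_def
    by (intro tendsto_intros tendsto_comp_gbp_to_beta(2)[OF p q]
        continuous_on_inc_Beta shifted_params_pos[OF \<alpha> \<beta> p \<beta>p])
  then show "(g \<longlongrightarrow> 0) at_top"
    by (simp add: inc_Beta_1[OF shifted_params_pos[OF \<alpha> \<beta> p \<beta>p]])
  have bound: "x * (1 - gbp_cdf \<alpha> \<beta> p q x)\<^sup>2 \<le> g x" if "0 < x" for x
  proof -
    define t where "t = gbp_to_beta p q x"
    have t: "0 < t" "t < 1"
      using gbp_to_beta_bounds[OF p q that] by (auto simp: t_def)
    have "x * (1 - gbp_cdf \<alpha> \<beta> p q x)\<^sup>2 \<le> x * (1 - gbp_cdf \<alpha> \<beta> p q x)"
      using that gbp_cdf_bounds[OF \<alpha> \<beta> p q, of x]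
      by (intro mult_left_mono) (auto simp: power2_eq_square mult_left_le_one_le)
    also have "\<dots> = q / Beta \<alpha> \<beta> * ((t / (1 - t)) powr (1 / p) * (Beta \<alpha> \<beta> - inc_Beta t \<alpha> \<beta>))"
      using that q Beta_real_pos[OF \<alpha> \<beta>]
      by (simp add: t_def gbp_to_beta_odds[OF p q] gbp_cdf_eq[OF \<alpha> \<beta> p q] field_simps)
    also have "\<dots> \<le> g x"
      unfolding g_def t_def[symmetric] using q Beta_real_pos[OF \<alpha> \<beta>] \<alpha> p \<beta>p t
      by (intro mult_left_mono upper_inc_Beta_shift_le) (auto simp: field_simps)
    finally show ?thesis .
  qed
  show "eventually (\<lambda>x. x * (1 - gbp_cdf \<alpha> \<beta> p q x)\<^sup>2 \<le> g x) at_top"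
    using eventually_gt_at_top[of 0] by eventually_elim (rule bound)
  show "eventually (\<lambda>x. 0 \<le> x * (1 - gbp_cdf \<alpha> \<beta> p q x)\<^sup>2) at_top"
    using eventually_gt_at_top[of 0] by eventually_elim simp
qed simp

lemma set_integral_gbp_cdf_sq:
  assumes y: "0 < y"
  shows "set_integrable lborel {0<..<y} (\<lambda>x. (gbp_cdf \<alpha> \<beta> p q x)\<^sup>2)" (is ?integrable)
    and "(LBINT x:{0<..<y}. (gbp_cdf \<alpha> \<beta> p q x)\<^sup>2)
           = y * (gbp_cdf \<alpha> \<beta> p q y)\<^sup>2 - 2 * q / (Beta \<alpha> \<beta>)\<^sup>2 * gbp_K \<alpha> \<beta> p (gbp_to_beta p q y)"
      (is ?value)
proof -
  define K where "K x = q / (Beta \<alpha> \<beta>)\<^sup>2 * gbp_K \<alpha> \<beta> p (gbp_to_beta p q x)" for x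
  define \<Phi> where "\<Phi> x = x * (gbp_cdf \<alpha> \<beta> p q x)\<^sup>2 - 2 * K x" for x
  have \<Phi>': "(\<Phi> has_real_derivative (gbp_cdf \<alpha> \<beta> p q x)\<^sup>2) (at x)" if "0 < x" for x
    unfolding \<Phi>_def[abs_def] using that
    by (auto intro!: derivative_eq_intros has_real_derivative_gbp_cdf[OF \<alpha> \<beta> p q]
        has_real_derivative_gbp_K_comp[unfolded K_def[symmetric]]
        simp: algebra_simps power2_eq_square)
  have "((\<lambda>x. gbp_K \<alpha> \<beta> p (gbp_to_beta p q x)) \<longlongrightarrow> gbp_K \<alpha> \<beta> p 0) (at_right 0)"
    by (rule tendsto_comp_gbp_to_beta(1)[OF p q continuous_on_gbp_K[OF \<alpha> \<beta> p \<beta>p]])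
  then have "(\<Phi> \<longlongrightarrow> 0 * 0\<^sup>2 - 2 * (q / (Beta \<alpha> \<beta>)\<^sup>2 * 0)) (at_right 0)"
    unfolding \<Phi>_def K_def
    by (intro tendsto_intros tendsto_gbp_cdf_at_right_0[OF \<alpha> \<beta> p q]) (simp_all add: gbp_K_def)
  moreover have "(\<Phi> \<longlongrightarrow> \<Phi> y) (at_left y)"
    using DERIV_isCont[OF \<Phi>'[OF y]] by (simp add: isCont_def filterlim_at_split)
  moreover have "isCont (\<lambda>x. (gbp_cdf \<alpha> \<beta> p q x)\<^sup>2) x" if "0 < x" for x
    using isCont_gbp_cdf[OF \<alpha> \<beta> p q that] by (intro continuous_intros)
  ultimately show ?integrable ?value
    using set_integral_Ioo_FTC_nonneg[of 0 y \<Phi> "\<lambda>x. (gbp_cdf \<alpha> \<beta> p q x)\<^sup>2" 0 "\<Phi> y"] y \<Phi>'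
    by (auto simp: \<Phi>_def K_def)
qed

lemma set_integral_one_minus_gbp_cdf_sq:
  assumes y: "0 < y"
  shows "set_integrable lborel {y<..} (\<lambda>x. (1 - gbp_cdf \<alpha> \<beta> p q x)\<^sup>2)" (is ?integrable)
    and "(LBINT x:{y<..}. (1 - gbp_cdf \<alpha> \<beta> p q x)\<^sup>2) =
           2 * gbp_mean \<alpha> \<beta> p q - 2 * q / (Beta \<alpha> \<beta>)\<^sup>2 * gbp_K \<alpha> \<beta> p 1
           - (y * (1 - gbp_cdf \<alpha> \<beta> p q y)\<^sup>2
              + 2 * q / Beta \<alpha> \<beta> * inc_Beta (gbp_to_beta p q y) (\<alpha> + 1 / p) (\<beta> - 1 / p)
              - 2 * q / (Beta \<alpha> \<beta>)\<^sup>2 * gbp_K \<alpha> \<beta> p (gbp_to_beta p q y))"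
      (is ?value)
proof -
  define K where "K x = q / (Beta \<alpha> \<beta>)\<^sup>2 * gbp_K \<alpha> \<beta> p (gbp_to_beta p q x)" for x
  define M where "M x = q / Beta \<alpha> \<beta> * inc_Beta (gbp_to_beta p q x) (\<alpha> + 1 / p) (\<beta> - 1 / p)" for x
  define \<Phi> where "\<Phi> x = x * (1 - gbp_cdf \<alpha> \<beta> p q x)\<^sup>2 + 2 * M x - 2 * K x" for x
  have \<Phi>': "(\<Phi> has_real_derivative (1 - gbp_cdf \<alpha> \<beta> p q x)\<^sup>2) (at x)" if "0 < x" for x
    unfolding \<Phi>_def[abs_def] using that
    by (auto intro!: derivative_eq_intros has_real_derivative_gbp_cdf[OF \<alpha> \<beta> p q]
        has_real_derivative_inc_Beta_shifted_comp[unfolded M_def[symmetric]]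
        has_real_derivative_gbp_K_comp[unfolded K_def[symmetric]]
        simp: algebra_simps power2_eq_square)
  have "((\<lambda>x. inc_Beta (gbp_to_beta p q x) (\<alpha> + 1 / p) (\<beta> - 1 / p))
      \<longlongrightarrow> inc_Beta 1 (\<alpha> + 1 / p) (\<beta> - 1 / p)) at_top"
    by (intro tendsto_comp_gbp_to_beta(2)[OF p q] continuous_on_inc_Beta
        shifted_params_pos[OF \<alpha> \<beta> p \<beta>p])
  moreover have "((\<lambda>x. gbp_K \<alpha> \<beta> p (gbp_to_beta p q x)) \<longlongrightarrow> gbp_K \<alpha> \<beta> p 1) at_top"
    by (rule tendsto_comp_gbp_to_beta(2)[OF p q continuous_on_gbp_K[OF \<alpha> \<beta> p \<beta>p]])
  ultimately have "(\<Phi> \<longlongrightarrow> 0 + 2 * (q / Beta \<alpha> \<beta> * inc_Beta 1 (\<alpha> + 1 / p) (\<beta> - 1 / p))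
      - 2 * (q / (Beta \<alpha> \<beta>)\<^sup>2 * gbp_K \<alpha> \<beta> p 1)) at_top"
    unfolding \<Phi>_def M_def K_def by (intro tendsto_intros tendsto_mult_one_minus_gbp_cdf_sq)
  moreover have "0 + 2 * (q / Beta \<alpha> \<beta> * inc_Beta 1 (\<alpha> + 1 / p) (\<beta> - 1 / p))
      = 2 * gbp_mean \<alpha> \<beta> p q"
    by (simp add: inc_Beta_1[OF shifted_params_pos[OF \<alpha> \<beta> p \<beta>p]] gbp_mean_def)
  moreover have "(\<Phi> \<longlongrightarrow> \<Phi> y) (at_right y)"
    using DERIV_isCont[OF \<Phi>'[OF y]] by (simp add: isCont_def filterlim_at_split)
  moreover have "isCont (\<lambda>x. (1 - gbp_cdf \<alpha> \<beta> p q x)\<^sup>2) x" if "y < x" for x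
    using isCont_gbp_cdf[OF \<alpha> \<beta> p q, of x] that y by (intro continuous_intros) auto
  ultimately show ?integrable ?value
    using set_integral_Ioi_FTC_nonneg[of y \<Phi> "\<lambda>x. (1 - gbp_cdf \<alpha> \<beta> p q x)\<^sup>2" "\<Phi> y"] y \<Phi>'
    by (auto simp: \<Phi>_def M_def K_def)
qed

lemma hyp2F1_gbp_term:
  assumes "0 < y" and "\<alpha> + \<beta> \<noteq> 1"
  defines "w \<equiv> gbp_to_beta p q y"
  shows "y / (\<alpha> + \<beta> - 1) * w powr (\<alpha> - 1) * (1 - w) powr \<beta>
             * (1 - hyp2F1 1 (\<alpha> + \<beta> - 1) (\<alpha> + 1 / p) w)
           = - q * inc_Beta w (\<alpha> + 1 / p) (\<beta> - 1 / p)"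
proof -
  define S where "S = inc_Beta_series (\<alpha> + 1 / p) (\<beta> - 1 / p) w"
  have w: "0 < w" "w < 1"
    using gbp_to_beta_bounds[OF p q assms(1)] by (auto simp: w_def)
  have hyp2F1: "hyp2F1 1 (\<alpha> + \<beta> - 1) (\<alpha> + 1 / p) w = 1 + (\<alpha> + \<beta> - 1) * w * S"
    using hyp2F1_eq_inc_Beta_series[OF shifted_params_pos[OF \<alpha> \<beta> p \<beta>p], of w] w
    by (simp add: S_def)
  have "\<alpha> + \<beta> - 1 \<noteq> 0"
    using assms(2) by simp
  then have "y / (\<alpha> + \<beta> - 1) * w powr (\<alpha> - 1) * (1 - w) powr \<beta>
        * (1 - hyp2F1 1 (\<alpha> + \<beta> - 1) (\<alpha> + 1 / p) w)
      = - (y * ((w powr (\<alpha> - 1) * w) * (1 - w) powr \<beta>)) * S"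
    unfolding hyp2F1 by (simp add: field_simps)
  also have "w powr (\<alpha> - 1) * w = w powr \<alpha>"
    using w by (simp add: powr_diff)
  also have "y * (w powr \<alpha> * (1 - w) powr \<beta>) = q * (w powr (\<alpha> + 1 / p) * (1 - w) powr (\<beta> - 1 / p))"
    using gbp_to_beta_odds[OF p q assms(1)] w q
    by (simp add: w_def[symmetric] powr_add powr_diff powr_divide field_simps)
  also have "- (q * (w powr (\<alpha> + 1 / p) * (1 - w) powr (\<beta> - 1 / p))) * S
      = - q * inc_Beta w (\<alpha> + 1 / p) (\<beta> - 1 / p)"
    using inc_Beta_eq_series[OF shifted_params_pos[OF \<alpha> \<beta> p \<beta>p], of w] w by (simp add: S_def)
  finally show ?thesis .
qed

end

theorem proposition1:
  fixes \<alpha> \<beta> p q y :: real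
  assumes "\<alpha> > 0" and "\<beta> > 0" and "p > 0" and "q > 0"
    and "\<beta> * p > 1" and "\<alpha> + \<beta> \<noteq> 1" and "y > 0"
  defines "w \<equiv> y powr p / (q powr p + y powr p)"
  shows "CRPS (gbp_cdf \<alpha> \<beta> p q) y =
      2 * gbp_mean \<alpha> \<beta> p q - y
      + 2 / Beta \<alpha> \<beta> *
          (y * inc_Beta w \<alpha> \<beta>
           + y / (\<alpha> + \<beta> - 1) * w powr (\<alpha> - 1) * (1 - w) powr \<beta>
             * (1 - hyp2F1 1 (\<alpha> + \<beta> - 1) (\<alpha> + 1 / p) w))
      - 2 * q / (\<alpha> * (Beta \<alpha> \<beta>)\<^sup>2) * Beta (2 * \<alpha> + 1 / p) (2 * \<beta> - 1 / p)
          * hyp3F2 (\<alpha> + \<beta>) 1 (2 * \<alpha> + 1 / p) (\<alpha> + 1) (2 * \<alpha> + 2 * \<beta>) 1"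
proof -
  note params = assms(1-5) and y = assms(7)
  define B where "B = Beta \<alpha> \<beta>"
  define I where "I = inc_Beta w \<alpha> \<beta>"
  define M where "M = inc_Beta w (\<alpha> + 1 / p) (\<beta> - 1 / p)"
  define K where "K = gbp_K \<alpha> \<beta> p"
  have w: "w = gbp_to_beta p q y"
    using assms(3,4) y by (simp add: w_def gbp_to_beta_eq)
  have F_y: "gbp_cdf \<alpha> \<beta> p q y = I / B"
    using y by (simp add: gbp_cdf_eq[OF assms(1-4)] w I_def B_def)
  have "CRPS (gbp_cdf \<alpha> \<beta> p q) y
      = (LBINT x:{0<..<y}. (gbp_cdf \<alpha> \<beta> p q x)\<^sup>2) + (LBINT x:{y<..}. (1 - gbp_cdf \<alpha> \<beta> p q x)\<^sup>2)"
    using y set_integral_gbp_cdf_sq(1)[OF params] set_integral_one_minus_gbp_cdf_sq(1)[OF params]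
    by (intro CRPS_eq_split) (auto simp: gbp_cdf_eq[OF assms(1-4)])
  also have "\<dots> = y * (I / B)\<^sup>2 - 2 * q / B\<^sup>2 * K w
      + (2 * gbp_mean \<alpha> \<beta> p q - 2 * q / B\<^sup>2 * K 1
         - (y * (1 - I / B)\<^sup>2 + 2 * q / B * M - 2 * q / B\<^sup>2 * K w))"
    unfolding set_integral_gbp_cdf_sq(2)[OF params y] set_integral_one_minus_gbp_cdf_sq(2)[OF params y]
    by (simp only: F_y w B_def K_def M_def)
  also have "\<dots> = 2 * gbp_mean \<alpha> \<beta> p q - y + 2 / B * (y * I - q * M) - 2 * q / B\<^sup>2 * K 1"
    using Beta_real_pos[OF assms(1,2)] by (simp add: B_def field_simps power2_eq_square)
  finally show ?thesis
    using assms(1) Beta_real_pos[OF assms(1,2)] hyp2F1_gbp_term[OF params y assms(6)]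
    by (simp add: K_def gbp_K_1[OF assms(1-3,5)] w I_def M_def B_def field_simps power2_eq_square)
qed

end
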